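(* Under the setting of structured quadratic-bilinear systems and projection-based reduction, let $\sigma_1,\sigma_2\in\mathbb C$ be such that $\mathcal C,\mathcal K,\mathcal B,\mathcal N,\mathcal H$ can be evaluated at $\sigma_1,\sigma_2,\sigma_1+\sigma_2$ (and $\mathcal H$ at $(\sigma_1,\sigma_2),(\sigma_2,\sigma_1)$) and $\mathcal K(\sigma_1),\mathcal K(\sigma_2),\mathcal K(\sigma_1+\sigma_2)$ are invertible. Let $V_{1,1}=\mathcal K(\sigma_1)^{-1}\mathcal B(\sigma_1)$ and $V_{1,2}=\mathcal K(\sigma_2)^{-1}\mathcal B(\sigma_2)$. Let $V,W\in\mathbb C^{n\times r}$ have full column rank with $$\operatorname{span}(V)\supseteq\operatorname{span}([V_{1,1}\ V_{1,2}]),\qquad \operatorname{span}(W)\supseteq\operatorname{span}\big(\mathcal K(\sigma_1+\sigma_2)^{-\mathsf H}\mathcal C(\sigma_1+\sigma_2)^{\mathsf H}\big),$$ and assume $W^{\mathsf H}\mathcal K(s)V$ is invertible for $s\in\{\sigma_1,\sigma_2,\sigma_1+\sigma_2\}$. Then $$G_1(\sigma_1)=\widehat G_1(\sigma_1),\ G_1(\sigma_2)=\widehat G_1(\sigma_2),\ G_1(\sigma_1+\sigma_2)=\widehat G_1(\sigma_1+\sigma_2),\ G_2(\sigma_1,\sigma_2)=\widehat G_2(\sigma_1,\sigma_2).$$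
   Context: A structured quadratic-bilinear system (in frequency domain) with $n$ states, $m$ inputs and $p$ outputs is given by matrix-valued functions $\mathcal C:\mathbb C\to\mathbb C^{p\times n}$, $\mathcal K:\mathbb C\to\mathbb C^{n\times n}$, $\mathcal B:\mathbb C\to\mathbb C^{n\times m}$, $\mathcal N:\mathbb C\to\mathbb C^{n\times nm}$ with $\mathcal N(s)=[\mathcal N_1(s)\ \cdots\ \mathcal N_m(s)]$, $\mathcal N_j(s)\in\mathbb C^{n\times n}$, and $\mathcal H:\mathbb C\times\mathbb C\to\mathbb C^{n\times n^2}$. Its structured symmetric subsystem transfer functions are $G_1(s_1)=\mathcal C(s_1)g_1(s_1)$, $G_2(s_1,s_2)=\mathcal C(s_1+s_2)g_2(s_1,s_2)$, where $g_1(s_1)=\mathcal K(s_1)^{-1}\mathcal B(s_1)$ and $g_2(s_1,s_2)=\tfrac12\mathcal K(s_1+s_2)^{-1}\big(\mathcal H(s_1,s_2)(g_1(s_1)\otimes g_1(s_2))+\mathcal H(s_2,s_1)(g_1(s_2)\otimes g_1(s_1))+\mathcal N(s_1)(I_m\otimes g_1(s_1))+\mathcal N(s_2)(I_m\otimes g_1(s_2))\big)$, wherever the inverses exist; $\otimes$ is the Kronecker product. The reduced-order system obtained by projection with $V,W\in\mathbb C^{n\times r}$ is given by $\widehat{\mathcal C}(s)=\mathcal C(s)V$, $\widehat{\mathcal K}(s)=W^{\mathsf H}\mathcal K(s)V$, $\widehat{\mathcal B}(s)=W^{\mathsf H}\mathcal B(s)$, $\widehat{\mathcal N}(s)=W^{\mathsf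 H}\mathcal N(s)(I_m\otimes V)$, $\widehat{\mathcal H}(s_1,s_2)=W^{\mathsf H}\mathcal H(s_1,s_2)(V\otimes V)$, where $W^{\mathsf H}$ is the conjugate transpose and $\mathcal K(s)^{-\mathsf H}=(\mathcal K(s)^{-1})^{\mathsf H}$; its transfer functions $\widehat G_k$ are defined by the same formulas with hatted functions. *)

theory Defs
  imports "HOL-Analysis.Analysis"
begin

text \<open>Matrices are type-indexed: a p x n complex matrix is complex^'n^'p.
  The index set of size n*m is the product type; the pair (j,k) of a
  column index of N = [N_1 ... N_m] means column k of block N_j.\<close>

definition ctrans :: "complex^'n^'m \<Rightarrow> complex^'m^'n" where
  "ctrans A = (\<chi> i j. cnj (A $ j $ i))"

definition kron :: "complex^'q^'p \<Rightarrow> complex^'s^'r \<Rightarrow> complex^('q \<times> 's)^('p \<times> 'r)" where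
  "kron A B = (\<chi> ik jl. A $ fst ik $ fst jl * B $ snd ik $ snd jl)"

definition g1 :: "(complex \<Rightarrow> complex^'n^'n) \<Rightarrow> (complex \<Rightarrow> complex^'m^'n)
    \<Rightarrow> complex \<Rightarrow> complex^'m^'n" where
  "g1 K B s = matrix_inv (K s) ** B s"

definition g2 :: "(complex \<Rightarrow> complex^'n::finite^'n) \<Rightarrow> (complex \<Rightarrow> complex^'m::finite^'n)
    \<Rightarrow> (complex \<Rightarrow> complex^('m \<times> 'n)^'n) \<Rightarrow> (complex \<Rightarrow> complex \<Rightarrow> complex^('n \<times> 'n)^'n)
    \<Rightarrow> complex \<Rightarrow> complex \<Rightarrow> complex^('m \<times> 'm)^'n" where
  "g2 K B N H s1 s2 = (1/2::real) *\<^sub>R (matrix_inv (K (s1 + s2)) **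
     (H s1 s2 ** kron (g1 K B s1) (g1 K B s2) + H s2 s1 ** kron (g1 K B s2) (g1 K B s1)
      + N s1 ** kron (mat 1 :: complex^'m^'m) (g1 K B s1)
      + N s2 ** kron (mat 1 :: complex^'m^'m) (g1 K B s2)))"

definition G1 :: "(complex \<Rightarrow> complex^'n^'p) \<Rightarrow> (complex \<Rightarrow> complex^'n^'n) \<Rightarrow> (complex \<Rightarrow> complex^'m^'n)
    \<Rightarrow> complex \<Rightarrow> complex^'m^'p" where
  "G1 C K B s = C s ** g1 K B s"

definition G2 :: "(complex \<Rightarrow> complex^'n^'p) \<Rightarrow> (complex \<Rightarrow> complex^'n^'n) \<Rightarrow> (complex \<Rightarrow> complex^'m^'n)
    \<Rightarrow> (complex \<Rightarrow> complex^('m \<times> 'n)^'n) \<Rightarrow> (complex \<Rightarrow> complex \<Rightarrow> complex^('n \<times> 'n)^'n)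
    \<Rightarrow> complex \<Rightarrow> complex \<Rightarrow> complex^('m \<times> 'm)^'p" where
  "G2 C K B N H s1 s2 = C (s1 + s2) ** g2 K B N H s1 s2"

definition redC :: "(complex \<Rightarrow> complex^'n^'p) \<Rightarrow> complex^'r^'n \<Rightarrow> complex \<Rightarrow> complex^'r^'p" where
  "redC C V = (\<lambda>s. C s ** V)"
definition redK :: "complex^'r^'n \<Rightarrow> (complex \<Rightarrow> complex^'n^'n) \<Rightarrow> complex^'r^'n \<Rightarrow> complex \<Rightarrow> complex^'r^'r" where
  "redK W K V = (\<lambda>s. ctrans W ** K s ** V)"
definition redB :: "complex^'r^'n \<Rightarrow> (complex \<Rightarrow> complex^'m^'n) \<Rightarrow> complex \<Rightarrow> complex^'m^'r" where
  "redB W B = (\<lambda>s. ctrans W ** B s)"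
definition redN :: "complex^'r::finite^'n::finite \<Rightarrow> (complex \<Rightarrow> complex^('m::finite \<times> 'n)^'n) \<Rightarrow> complex^'r^'n
    \<Rightarrow> complex \<Rightarrow> complex^('m \<times> 'r)^'r" where
  "redN W N V = (\<lambda>s. ctrans W ** N s ** kron (mat 1 :: complex^'m^'m) V)"
definition redH :: "complex^'r^'n \<Rightarrow> (complex \<Rightarrow> complex \<Rightarrow> complex^('n \<times> 'n)^'n) \<Rightarrow> complex^'r^'n
    \<Rightarrow> complex \<Rightarrow> complex \<Rightarrow> complex^('r \<times> 'r)^'r" where
  "redH W H V = (\<lambda>s1 s2. ctrans W ** H s1 s2 ** kron V V)"

end

theory Submission
  imports Defs
begin

text \<open>Everything rests on two Petrov-Galerkin identities, valid whenever \<open>K\<close> and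
  \<open>W\<^sup>H K V\<close> are invertible: if \<open>K\<^sup>-\<^sup>1 B = V X\<close> then \<open>(W\<^sup>H K V)\<^sup>-\<^sup>1 W\<^sup>H B = X\<close>, and if
  \<open>C K\<^sup>-\<^sup>1 = Z W\<^sup>H\<close> then \<open>C V (W\<^sup>H K V)\<^sup>-\<^sup>1 W\<^sup>H = C K\<^sup>-\<^sup>1\<close>. The first shows that the reduced
  \<open>g\<^sub>1\<close> at \<open>\<sigma>\<^sub>1, \<sigma>\<^sub>2\<close> is the coefficient of the full one in the basis \<open>V\<close>; together with
  \<open>(A \<otimes> B)(C \<otimes> D) = AC \<otimes> BD\<close> it follows that the reduced forcing term of \<open>g\<^sub>2(\<sigma>\<^sub>1, \<sigma>\<^sub>2)\<close>
  is \<open>W\<^sup>H\<close> times the full one. The second identity, applied at \<open>\<sigma>\<^sub>1 + \<sigma>\<^sub>2\<close>, then gives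
  \<open>G\<^sub>1(\<sigma>\<^sub>1 + \<sigma>\<^sub>2)\<close> and \<open>G\<^sub>2(\<sigma>\<^sub>1, \<sigma>\<^sub>2)\<close>.\<close>

lemma matrix_inv_right:
  fixes A :: "'a::semiring_1^'n^'m"
  assumes "invertible A"
  shows "A ** matrix_inv A = mat 1"
  using someI_ex[OF assms[unfolded invertible_def]] unfolding matrix_inv_def by auto

lemma matrix_inv_left:
  fixes A :: "'a::semiring_1^'n^'m"
  assumes "invertible A"
  shows "matrix_inv A ** A = mat 1"
  using someI_ex[OF assms[unfolded invertible_def]] unfolding matrix_inv_def by auto

lemma span_columns_eq_range:
  fixes A :: "'a::field^'n^'m"
  shows "vec.span (columns A) = range ((*v) A)"
proof
  have "columns A \<subseteq> range ((*v) A)"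
    unfolding columns_def column_def
    by (auto simp: matrix_vector_mult_def axis_def if_distrib vec_eq_iff sum.delta
        cong: if_cong intro!: image_eqI[where x="axis _ 1"])
  moreover have "vec.subspace (range ((*v) A))"
    using vec.subspace_image[OF vec.subspace_UNIV, of A] by simp
  ultimately show "vec.span (columns A) \<subseteq> range ((*v) A)"
    by (simp add: vec.span_minimal)
  show "range ((*v) A) \<subseteq> vec.span (columns A)"
    using matrix_vector_mult_in_columnspace_gen by blast
qed

lemma span_columns_subset_imp_factor:
  fixes X :: "'a::field^'k^'m" and A :: "'a^'n^'m"
  assumes "vec.span (columns X) \<subseteq> vec.span (columns A)"
  shows "\<exists>Y. X = A ** Y"
proof -
  have "column j X \<in> vec.span (columns X)" for j
    by (rule vec.span_base) (auto simp: columns_def)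
  then have "column j X \<in> range ((*v) A)" for j
    using assms span_columns_eq_range[of A] by blast
  then have "\<forall>j. \<exists>y. column j X = A *v y"
    by blast
  then obtain y where y: "\<And>j. column j X = A *v y j" by metis
  then have "X = A ** (\<chi> k j. y j $ k)"
    by (simp add: vec_eq_iff matrix_matrix_mult_def column_def matrix_vector_mult_def)
  then show ?thesis ..
qed

lemma kron_mult: "kron A B ** kron C D = kron (A ** C) (B ** D)"
  unfolding kron_def matrix_matrix_mult_def
  by (simp add: vec_eq_iff sum_product sum.cartesian_product ac_simps case_prod_beta
      UNIV_Times_UNIV[symmetric] del: UNIV_Times_UNIV)

lemma ctrans_mult: "ctrans (A ** B) = ctrans B ** ctrans A"
  unfolding ctrans_def matrix_matrix_mult_def by (simp add: vec_eq_iff mult.commute)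

lemma ctrans_ctrans [simp]: "ctrans (ctrans A) = A"
  unfolding ctrans_def by (simp add: vec_eq_iff)

lemma petrov_galerkin_right:
  assumes "invertible K" and "invertible (ctrans W ** K ** V)"
    and "matrix_inv K ** B = V ** X"
  shows "matrix_inv (ctrans W ** K ** V) ** (ctrans W ** B) = X"
proof -
  have "B = K ** V ** X"
    using assms(3) by (metis matrix_mul_assoc matrix_mul_lid matrix_inv_right[OF assms(1)])
  then have "ctrans W ** B = (ctrans W ** K ** V) ** X"
    by (simp add: matrix_mul_assoc)
  then show ?thesis
    by (metis matrix_mul_assoc matrix_mul_lid matrix_inv_left[OF assms(2)])
qed

lemma petrov_galerkin_left:
  assumes "invertible K" and "invertible (ctrans W ** K ** V)"
    and "C ** matrix_inv K = Z ** ctrans W"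
  shows "C ** V ** matrix_inv (ctrans W ** K ** V) ** ctrans W = C ** matrix_inv K"
proof -
  have "C = Z ** ctrans W ** K"
    using assms(3) matrix_inv_left[OF assms(1)] by (metis matrix_mul_assoc matrix_mul_rid)
  then have "C ** V ** matrix_inv (ctrans W ** K ** V) ** ctrans W
      = Z ** ((ctrans W ** K ** V) ** matrix_inv (ctrans W ** K ** V)) ** ctrans W"
    by (simp add: matrix_mul_assoc)
  also have "\<dots> = Z ** ctrans W"
    by (simp add: matrix_inv_right[OF assms(2)])
  finally show ?thesis
    using assms(3) by simp
qed

lemma g1_reduced_eq:
  assumes "invertible (K s)" and "invertible (ctrans W ** K s ** V)"
    and "g1 K B s = V ** X"
  shows "g1 (redK W K V) (redB W B) s = X"
  using petrov_galerkin_right[OF assms(1,2) assms(3)[unfolded g1_def]]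
  unfolding g1_def redK_def redB_def .

lemma G1_reduced_eq_right:
  assumes "invertible (K s)" and "invertible (ctrans W ** K s ** V)"
    and "vec.span (columns (g1 K B s)) \<subseteq> vec.span (columns V)"
  shows "G1 C K B s = G1 (redC C V) (redK W K V) (redB W B) s"
proof -
  obtain X where X: "g1 K B s = V ** X"
    using span_columns_subset_imp_factor[OF assms(3)] by blast
  show ?thesis
    unfolding G1_def redC_def g1_reduced_eq[OF assms(1,2) X] X by (simp add: matrix_mul_assoc)
qed

lemma left_span_imp_factor:
  assumes "vec.span (columns (ctrans (matrix_inv K) ** ctrans C)) \<subseteq> vec.span (columns W)"
  obtains Z where "C ** matrix_inv K = Z ** ctrans W"
proof -
  obtain Y where "ctrans (matrix_inv K) ** ctrans C = W ** Y"
    using span_columns_subset_imp_factor[OF assms] by blast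
  then have "ctrans (ctrans (matrix_inv K) ** ctrans C) = ctrans (W ** Y)"
    by simp
  then have "C ** matrix_inv K = ctrans Y ** ctrans W"
    by (simp add: ctrans_mult)
  then show thesis by (rule that)
qed

lemma G1_reduced_eq_left:
  assumes "invertible (K s)" and "invertible (ctrans W ** K s ** V)"
    and "vec.span (columns (ctrans (matrix_inv (K s)) ** ctrans (C s))) \<subseteq> vec.span (columns W)"
  shows "G1 C K B s = G1 (redC C V) (redK W K V) (redB W B) s"
proof -
  obtain Z where "C s ** matrix_inv (K s) = Z ** ctrans W"
    using left_span_imp_factor[OF assms(3)] .
  from petrov_galerkin_left[OF assms(1,2) this] show ?thesis
    unfolding G1_def redC_def g1_def redK_def redB_def by (simp add: matrix_mul_assoc)
qed

lemma G2_reduced_eq: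
  fixes K :: "complex \<Rightarrow> complex^'n::finite^'n" and B :: "complex \<Rightarrow> complex^'m::finite^'n"
    and V W :: "complex^'r::finite^'n"
  assumes "invertible (K s1)" and "invertible (ctrans W ** K s1 ** V)"
    and "invertible (K s2)" and "invertible (ctrans W ** K s2 ** V)"
    and "invertible (K (s1 + s2))" and "invertible (ctrans W ** K (s1 + s2) ** V)"
    and "vec.span (columns (g1 K B s1)) \<subseteq> vec.span (columns V)"
    and "vec.span (columns (g1 K B s2)) \<subseteq> vec.span (columns V)"
    and "vec.span (columns (ctrans (matrix_inv (K (s1 + s2))) ** ctrans (C (s1 + s2))))
           \<subseteq> vec.span (columns W)"
  shows "G2 C K B N H s1 s2 = G2 (redC C V) (redK W K V) (redB W B) (redN W N V) (redH W H V) s1 s2"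
proof -
  obtain X1 where X1: "g1 K B s1 = V ** X1"
    using span_columns_subset_imp_factor[OF assms(7)] by blast
  obtain X2 where X2: "g1 K B s2 = V ** X2"
    using span_columns_subset_imp_factor[OF assms(8)] by blast
  obtain Z where Z: "C (s1 + s2) ** matrix_inv (K (s1 + s2)) = Z ** ctrans W"
    using left_span_imp_factor[OF assms(9)] .
  define F where "F = H s1 s2 ** kron (g1 K B s1) (g1 K B s2) + H s2 s1 ** kron (g1 K B s2) (g1 K B s1)
      + N s1 ** kron (mat 1 :: complex^'m^'m) (g1 K B s1)
      + N s2 ** kron (mat 1 :: complex^'m^'m) (g1 K B s2)"
  have reduced_forcing: "redH W H V s1 s2 ** kron X1 X2 + redH W H V s2 s1 ** kron X2 X1
      + redN W N V s1 ** kron (mat 1 :: complex^'m^'m) X1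
      + redN W N V s2 ** kron (mat 1 :: complex^'m^'m) X2 = ctrans W ** F"
    unfolding F_def redH_def redN_def X1 X2
    by (simp add: kron_mult matrix_add_ldistrib matrix_mul_assoc[symmetric])
  note oblique_projection = petrov_galerkin_left[OF assms(5,6) Z]
  show ?thesis
    unfolding G2_def g2_def g1_reduced_eq[OF assms(1,2) X1] g1_reduced_eq[OF assms(3,4) X2]
      reduced_forcing F_def[symmetric]
    by (simp only: redC_def redK_def matrix_scalar_ac scalar_matrix_assoc[symmetric]
        matrix_mul_assoc oblique_projection)
qed

theorem proposition4p2:
  fixes C :: "complex \<Rightarrow> complex^'n::finite^'p::finite"
    and K :: "complex \<Rightarrow> complex^'n^'n"
    and B :: "complex \<Rightarrow> complex^'m::finite^'n"
    and N :: "complex \<Rightarrow> complex^('m \<times> 'n)^'n"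
    and H :: "complex \<Rightarrow> complex \<Rightarrow> complex^('n \<times> 'n)^'n"
    and V W :: "complex^'r::finite^'n"
    and \<sigma>1 \<sigma>2 :: complex
  assumes "invertible (K \<sigma>1)" and "invertible (K \<sigma>2)" and "invertible (K (\<sigma>1 + \<sigma>2))"
    and "rank V = CARD('r)" and "rank W = CARD('r)"
    and "vec.span (columns (matrix_inv (K \<sigma>1) ** B \<sigma>1) \<union> columns (matrix_inv (K \<sigma>2) ** B \<sigma>2))
           \<subseteq> vec.span (columns V)"
    and "vec.span (columns (ctrans (matrix_inv (K (\<sigma>1 + \<sigma>2))) ** ctrans (C (\<sigma>1 + \<sigma>2))))
           \<subseteq> vec.span (columns W)"
    and "invertible (ctrans W ** K \<sigma>1 ** V)" and "invertible (ctrans W ** K \<sigma>2 ** V)"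
    and "invertible (ctrans W ** K (\<sigma>1 + \<sigma>2) ** V)"
  shows "G1 C K B \<sigma>1 = G1 (redC C V) (redK W K V) (redB W B) \<sigma>1
       \<and> G1 C K B \<sigma>2 = G1 (redC C V) (redK W K V) (redB W B) \<sigma>2
       \<and> G1 C K B (\<sigma>1 + \<sigma>2) = G1 (redC C V) (redK W K V) (redB W B) (\<sigma>1 + \<sigma>2)
       \<and> G2 C K B N H \<sigma>1 \<sigma>2
         = G2 (redC C V) (redK W K V) (redB W B) (redN W N V) (redH W H V) \<sigma>1 \<sigma>2"
proof -
  have right_span: "vec.span (columns (g1 K B s)) \<subseteq> vec.span (columns V)"
    if "s \<in> {\<sigma>1, \<sigma>2}" for s
  proof -
    have "columns (g1 K B s) \<subseteq> columns (g1 K B \<sigma>1) \<union> columns (g1 K B \<sigma>2)"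
      using that by auto
    then show ?thesis
      using assms(6) vec.span_mono unfolding g1_def by blast
  qed
  show ?thesis
    using G1_reduced_eq_right[where C=C and K=K and s=\<sigma>1, OF assms(1,8) right_span]
      G1_reduced_eq_right[where C=C and K=K and s=\<sigma>2, OF assms(2,9) right_span]
      G1_reduced_eq_left[where C=C and K=K and B=B and s="\<sigma>1 + \<sigma>2", OF assms(3,10,7)]
      G2_reduced_eq[where C=C and K=K and N=N and H=H, OF assms(1,8,2,9,3,10) right_span right_span
        assms(7)]
    by blast
qed

end
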